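(* Let $p$ be a prime number and let $x,y,z\in\mathbb{N}$ (positive integers) with $x\le y\le z$ satisfy $$\frac{4}{p}=\frac{1}{x}+\frac{1}{y}+\frac{1}{z}.$$ Then $$4xy-(x+y)p=\gcd(y,p)\,\gcd(xy,\,x+y).$$
   Context: $\mathbb{N}$ denotes the positive integers. *)

theory Defs
  imports Complex_Main "HOL-Computational_Algebra.Primes"
begin

end

theory Submission
  imports Defs
begin

text \<open>Clearing denominators gives \<open>z D = p x y\<close> for \<open>D = 4xy - (x+y)p\<close>, so \<open>D > 0\<close>, and
  \<open>y \<le> z\<close> gives \<open>D \<le> p x < p\<^sup>2\<close>. With \<open>M = gcd(xy, x+y)\<close> we have \<open>M dvd D\<close>, and \<open>D\<close> divides both
  \<open>p\<^sup>2 x y\<close> and \<open>p\<^sup>2(x+y) = 4pxy - pD\<close>, hence \<open>p\<^sup>2 M\<close>. Since \<open>p\<close> does not divide \<open>M\<close>, the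
  quotient \<open>D / M\<close> is a divisor of \<open>p\<^sup>2\<close> below \<open>p\<^sup>2\<close>, i.e. \<open>1\<close> or \<open>p\<close>; it is \<open>p\<close> exactly
  when \<open>p dvd y\<close>, the only exception (\<open>p = 2\<close>, \<open>x = 1\<close>) being ruled out by \<open>D \<le> p x\<close>.\<close>

lemma four_over_prime_clear_denominators:
  fixes p x y z :: nat
  assumes "p > 0" "x > 0" "y > 0" "z > 0"
    and "4 / real p = 1 / real x + 1 / real y + 1 / real z"
  shows "4 * x * y * z = p * (x * y + y * z + z * x)"
proof -
  have "real (4 * x * y * z) = real (p * (x * y + y * z + z * x))"
    using assms by (simp add: field_simps)
  then show ?thesis
    by (simp only: of_nat_eq_iff)
qed

lemma smallest_denominator_less:
  fixes p x y z :: nat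
  assumes "4 * x * y * z = p * (x * y + y * z + z * x)"
    and "p > 0" "y > 0" "z > 0" "x \<le> y" "y \<le> z"
  shows "x < p"
proof -
  have "x * y \<le> y * z" "z * x \<le> y * z"
    using assms by (simp_all add: mult_mono)
  then have "p * (x * y + y * z + z * x) \<le> p * (3 * (y * z))"
    by (intro mult_le_mono2) linarith
  then have "4 * x * (y * z) \<le> (3 * p) * (y * z)"
    using assms(1) by (simp add: ac_simps)
  then have "4 * x \<le> 3 * p"
    using assms by simp
  then show ?thesis
    using assms by linarith
qed

lemma gcd_prod_sum_dvd_defect:
  fixes x y p :: int
  shows "gcd (x * y) (x + y) dvd 4 * x * y - (x + y) * p"
proof -
  have "gcd (x * y) (x + y) dvd 4 * (x * y) - p * (x + y)"
    by (simp add: dvd_diff)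
  then show ?thesis
    by (simp add: algebra_simps)
qed

lemma defect_dvd_prime_square_gcd:
  fixes x y p D :: int
  assumes "D = 4 * x * y - (x + y) * p" and "D dvd p * x * y"
  shows "D dvd p\<^sup>2 * gcd (x * y) (x + y)"
proof -
  have "p\<^sup>2 * (x + y) = 4 * (p * x * y) - p * D"
    unfolding assms(1) by (simp add: algebra_simps power2_eq_square)
  then have "D dvd p\<^sup>2 * (x + y)"
    using assms(2) by simp
  moreover have "D dvd p\<^sup>2 * (x * y)"
    using assms(2) dvd_mult[of D "p * x * y" p] by (simp add: power2_eq_square ac_simps)
  ultimately have "D dvd gcd (p\<^sup>2 * (x * y)) (p\<^sup>2 * (x + y))"
    by simp
  then show ?thesis
    by (simp add: gcd_mult_left abs_mult)
qed

lemma prime_not_dvd_gcd_prod_sum: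
  fixes p x y :: nat
  assumes "prime p" and "\<not> p dvd x"
  shows "\<not> p dvd gcd (x * y) (x + y)"
proof
  assume "p dvd gcd (x * y) (x + y)"
  then have "p dvd x * y" "p dvd x + y"
    by auto
  then have "p dvd y"
    using assms prime_dvd_mult_iff by blast
  then show False
    using \<open>p dvd x + y\<close> assms(2) by (simp add: dvd_add_left_iff)
qed

lemma proper_divisor_of_prime_square:
  fixes p q :: nat
  assumes "prime p" and "q dvd p\<^sup>2" and "q < p\<^sup>2"
  shows "q = 1 \<or> q = p"
proof -
  obtain k where "k \<le> 2" "q = p ^ k"
    using divides_primepow_nat assms(1,2) by blast
  with assms(3) show ?thesis
    by (cases k) (auto simp: numeral_2_eq_2 le_Suc_eq)
qed

lemma defect_bounds:
  fixes p x y z :: nat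
  defines "D \<equiv> 4 * int x * int y - (int x + int y) * int p"
  assumes "4 * x * y * z = p * (x * y + y * z + z * x)"
    and "p > 0" "x > 0" "y > 0" "y \<le> z"
  shows "int z * D = int p * int x * int y" and "0 < D" and "D \<le> int p * int x"
proof -
  show zD: "int z * D = int p * int x * int y"
    using arg_cong[OF assms(2), of int] unfolding D_def by (simp add: algebra_simps)
  then have "int z * D > 0"
    using assms(3-5) by simp
  then show "D > 0"
    by (simp add: zero_less_mult_iff)
  then have "int y * D \<le> int z * D"
    using assms(6) by (simp add: mult_right_mono)
  then have "int y * D \<le> int y * (int p * int x)"
    using zD by (simp add: ac_simps)
  then show "D \<le> int p * int x"
    using assms(5) by simp
qed

lemma defect_eq_gcd_or_prime_times_gcd:
  fixes p x y :: nat
  defines "D \<equiv> 4 * int x * int y - (int x + int y) * int p"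
    and "M \<equiv> gcd (x * y) (x + y)"
  assumes "prime p" and "0 < x" and "x < p"
    and "0 < D" and "D \<le> int p * int x" and "D dvd int p * int x * int y"
  shows "D = int M \<or> D = int M * int p"
proof -
  have M_int: "int M = gcd (int x * int y) (int x + int y)"
    unfolding M_def by (metis gcd_int_int_eq of_nat_add of_nat_mult)
  have "int M dvd D"
    unfolding D_def M_int by (rule gcd_prod_sum_dvd_defect)
  then obtain q where q: "D = int M * q"
    by (auto elim: dvdE)
  have "0 < M"
    unfolding M_def using \<open>0 < x\<close> by simp
  then have "0 < q"
    using q \<open>0 < D\<close> by (simp add: zero_less_mult_iff)
  then obtain Q where Q: "q = int Q"
    using zero_le_imp_eq_int by force
  have "int M * q dvd int M * (int p)\<^sup>2"
    using defect_dvd_prime_square_gcd[OF D_def[THEN meta_eq_to_obj_eq] \<open>D dvd _\<close>] q M_int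
    by (simp add: ac_simps)
  then have "int Q dvd int (p\<^sup>2)"
    using \<open>0 < M\<close> Q by simp
  then have "Q dvd p\<^sup>2"
    by (simp only: of_nat_dvd_iff)
  have "1 * q \<le> int M * q"
    using \<open>0 < M\<close> \<open>0 < q\<close> by (intro mult_right_mono) auto
  then have "q \<le> D"
    using q by simp
  also have "D \<le> int p * int x"
    by fact
  also have "\<dots> < int p * int p"
    using \<open>x < p\<close> by simp
  finally have "Q < p\<^sup>2"
    using Q by (simp add: power2_eq_square flip: of_nat_mult)
  with \<open>prime p\<close> \<open>Q dvd p\<^sup>2\<close> have "Q = 1 \<or> Q = p"
    by (intro proper_divisor_of_prime_square)
  with q Q show ?thesis
    by auto
qed

lemma defect_eq_gcd_mul_gcd:
  fixes p x y :: nat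
  defines "D \<equiv> 4 * int x * int y - (int x + int y) * int p"
    and "M \<equiv> gcd (x * y) (x + y)"
  assumes "prime p" and "0 < x" and "x < p"
    and "0 < D" and "D \<le> int p * int x" and "D dvd int p * int x * int y"
  shows "D = int (gcd y p) * int M"
proof -
  have cases: "D = int M \<or> D = int M * int p"
    using defect_eq_gcd_or_prime_times_gcd assms unfolding D_def M_def by blast
  have "\<not> p dvd x"
    using \<open>0 < x\<close> \<open>x < p\<close> by (auto dest: dvd_imp_le)
  show ?thesis
  proof (cases "p dvd y")
    case True
    have "\<not> int p dvd int M"
      unfolding M_def of_nat_dvd_iff
      using \<open>prime p\<close> \<open>\<not> p dvd x\<close> by (rule prime_not_dvd_gcd_prod_sum)
    moreover have "int p dvd D"
      unfolding D_def using True by (auto simp: algebra_simps)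
    ultimately have "D = int M * int p"
      using cases by auto
    moreover have "gcd y p = p"
      using True by (simp add: gcd_nat.absorb2)
    ultimately show ?thesis
      by simp
  next
    case False
    have "D \<noteq> int M * int p"
    proof
      assume "D = int M * int p"
      then have p_dvd_D: "int p dvd 4 * int x * int y - (int x + int y) * int p"
        unfolding D_def by simp
      have "int p dvd int (4 * x * y)"
        using dvd_add[OF p_dvd_D dvd_triv_right[of "int p" "int x + int y"]] by simp
      then have "p dvd 2 * 2"
        using \<open>prime p\<close> \<open>\<not> p dvd x\<close> False by (simp only: of_nat_dvd_iff) (simp add: prime_dvd_mult_iff)
      then have "p = 2"
        using \<open>prime p\<close> by (metis prime_dvd_mult_iff primes_dvd_imp_eq two_is_prime_nat)
      with \<open>0 < x\<close> \<open>x < p\<close> have "x = 1"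
        by simp
      with \<open>p = 2\<close> \<open>0 < D\<close> \<open>D \<le> int p * int x\<close> have "y = 2"
        unfolding D_def by simp
      with \<open>p = 2\<close> False show False
        by simp
    qed
    moreover have "gcd y p = 1"
      using False \<open>prime p\<close> by (metis coprime_commute prime_imp_coprime coprime_iff_gcd_eq_1)
    ultimately show ?thesis
      using cases by simp
  qed
qed

theorem theorem1:
  fixes p x y z :: nat
  assumes "prime p"
    and "x > 0" and "y > 0" and "z > 0"
    and "x \<le> y" and "y \<le> z"
    and "4 / real p = 1 / real x + 1 / real y + 1 / real z"
  shows "4 * int x * int y - (int x + int y) * int p
         = int (gcd y p) * int (gcd (x * y) (x + y))"
proof -
  have "p > 0"
    using assms(1) prime_gt_0_nat by blast
  then have eq: "4 * x * y * z = p * (x * y + y * z + z * x)"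
    using assms(2-4,7) by (rule four_over_prime_clear_denominators)
  have "x < p"
    using eq \<open>p > 0\<close> assms(3-6) by (rule smallest_denominator_less)
  note bounds = defect_bounds[OF eq \<open>p > 0\<close> assms(2,3,6)]
  have "4 * int x * int y - (int x + int y) * int p dvd int p * int x * int y"
    using bounds(1) by (metis dvd_triv_right)
  with bounds(2,3) show ?thesis
    using defect_eq_gcd_mul_gcd assms(1,2) \<open>x < p\<close> by blast
qed

end
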